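(* Let a Lie group with Lie algebra $\mathfrak g$ act on a manifold $N$, with induced action $\xi\triangleright f$ of $\xi\in\mathfrak g$ on $f\in C^\infty(N)$, choose a basis $\{e_i\}$ of $\mathfrak g$ with dual basis $\{e^i\}$, and define derivations of $C^\infty(N)\otimes S(\mathfrak g)$ by $\check e_i(v)=[e_i,v]$, $\check e_i(f)=0$; $\check e^i(v)=e^i(v)$, $\check e^i(f)=0$; $\check c_i(v)=0$, $\check c_i(f)=e_i\triangleright f$. Let $\sum X\otimes Y=-\sum_i(\check c_i+\check e_i/2)\otimes\check e^i$ and define, for functions $a$ and $1$-forms $\xi$, $$\hat\nabla_a\xi=\sum\big(X(a)\,\mathcal L_Y\xi-Y(a)\,\mathcal L_X\xi\big)$$ ($\mathcal L$ the Lie derivative). Then for $v,w\in\mathfrak g$ and $f,h\in C^\infty(N)$: $$\hat\nabla_v{\rm d}w=\tfrac12{\rm d}[v,w],\quad \hat\nabla_v{\rm d}h={\rm d}(v\triangleright h),\quad \hat\nabla_f{\rm d}w=0,\quad\hat\nabla_f{\rm d}h=0.$$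
   Context: $\hat\nabla$ is the preconnection induced by a cochain twist $F^{-1}=1\otimes1+\hbar\sum X\otimes Y+O(\hbar^2)$: with $a\bullet\xi=(F^{-(1)}\triangleright a)(F^{-(2)}\triangleright\xi)$ (vector fields acting by Lie derivative), $a\bullet\xi-\xi\bullet a=\hbar\hat\nabla_a\xi+O(\hbar^2)$. Here $v\in\mathfrak g$ are viewed as linear functions on $\mathfrak g^*$, so these are objects on $N\times\mathfrak g^*$. *)

theory Defs
  imports Main "HOL.Real_Vector_Spaces"
begin

text \<open>Algebraic model of the setting.  'g is the Lie algebra, 'f stands for C^inf(N),
 'a stands for C^inf(N) (x) S(g) = functions on N x g^*, 'w for the 1-forms on N x g^*.\<close>

definition lie_algebra :: "('g::real_vector \<Rightarrow> 'g \<Rightarrow> 'g) \<Rightarrow> bool" where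
  "lie_algebra br \<longleftrightarrow>
     (\<forall>u. linear (br u)) \<and> (\<forall>u v. br u v = - br v u) \<and>
     (\<forall>u v w. br u (br v w) + br v (br w u) + br w (br u v) = 0)"

definition is_deriv :: "('r::{comm_ring_1,real_algebra_1} \<Rightarrow> 'r) \<Rightarrow> bool" where
  "is_deriv D \<longleftrightarrow>
     (\<forall>a b. D (a + b) = D a + D b) \<and> (\<forall>r a. D (of_real r * a) = of_real r * D a) \<and>
     (\<forall>a b. D (a * b) = a * D b + b * D a)"

definition lie_action :: "('g::real_vector \<Rightarrow> 'g \<Rightarrow> 'g) \<Rightarrow> ('g \<Rightarrow> 'f::{comm_ring_1,real_algebra_1} \<Rightarrow> 'f) \<Rightarrow> bool" where
  "lie_action br act \<longleftrightarrow>
     (\<forall>f. linear (\<lambda>v. act v f)) \<and> (\<forall>v. is_deriv (act v)) \<and>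
     (\<forall>v w f. act (br v w) f = act v (act w f) - act w (act v f))"

definition dual_basis :: "('i::finite \<Rightarrow> 'g::real_vector) \<Rightarrow> ('i \<Rightarrow> 'g \<Rightarrow> real) \<Rightarrow> bool" where
  "dual_basis e ed \<longleftrightarrow>
     (\<forall>i. linear (ed i)) \<and> (\<forall>i j. ed i (e j) = (if i = j then 1 else 0)) \<and>
     (\<forall>v. v = (\<Sum>i\<in>UNIV. ed i v *\<^sub>R e i))"

inductive_set gen_alg :: "('f \<Rightarrow> 'a::{comm_ring_1,real_algebra_1}) \<Rightarrow> ('g \<Rightarrow> 'a) \<Rightarrow> 'a set"
  for jF jg where
  "jF f \<in> gen_alg jF jg"
| "jg v \<in> gen_alg jF jg"
| "of_real r \<in> gen_alg jF jg"
| "a \<in> gen_alg jF jg \<Longrightarrow> b \<in> gen_alg jF jg \<Longrightarrow> a + b \<in> gen_alg jF jg"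
| "a \<in> gen_alg jF jg \<Longrightarrow> b \<in> gen_alg jF jg \<Longrightarrow> a * b \<in> gen_alg jF jg"

definition forms_module :: "('a::{comm_ring_1,real_algebra_1} \<Rightarrow> 'w::ab_group_add \<Rightarrow> 'w) \<Rightarrow> bool" where
  "forms_module sc \<longleftrightarrow>
     (\<forall>a b x. sc (a * b) x = sc a (sc b x)) \<and> (\<forall>x. sc 1 x = x) \<and>
     (\<forall>a b x. sc (a + b) x = sc a x + sc b x) \<and> (\<forall>a x y. sc a (x + y) = sc a x + sc a y)"

definition differential :: "('a::{comm_ring_1,real_algebra_1} \<Rightarrow> 'w::ab_group_add \<Rightarrow> 'w) \<Rightarrow> ('a \<Rightarrow> 'w) \<Rightarrow> bool" where
  "differential sc d \<longleftrightarrow>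
     (\<forall>a b. d (a + b) = d a + d b) \<and> (\<forall>r a. d (of_real r * a) = sc (of_real r) (d a)) \<and>
     (\<forall>a b. d (a * b) = sc a (d b) + sc b (d a))"

inductive_set gen_forms :: "('a \<Rightarrow> 'w::ab_group_add \<Rightarrow> 'w) \<Rightarrow> ('a \<Rightarrow> 'w) \<Rightarrow> 'w set"
  for sc d where
  "0 \<in> gen_forms sc d"
| "d a \<in> gen_forms sc d"
| "x \<in> gen_forms sc d \<Longrightarrow> sc a x \<in> gen_forms sc d"
| "x \<in> gen_forms sc d \<Longrightarrow> y \<in> gen_forms sc d \<Longrightarrow> x + y \<in> gen_forms sc d"

text \<open>Lie derivative of 1-forms along a derivation (vector field) X (Cartan's formulas).\<close>
definition lie_derivative :: "('a::{comm_ring_1,real_algebra_1} \<Rightarrow> 'w::ab_group_add \<Rightarrow> 'w) \<Rightarrow> ('a \<Rightarrow> 'w)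
    \<Rightarrow> (('a \<Rightarrow> 'a) \<Rightarrow> 'w \<Rightarrow> 'w) \<Rightarrow> bool" where
  "lie_derivative sc d L \<longleftrightarrow>
     (\<forall>X. is_deriv X \<longrightarrow>
        (\<forall>x y. L X (x + y) = L X x + L X y) \<and>
        (\<forall>a x. L X (sc a x) = sc (X a) x + sc a (L X x)) \<and>
        (\<forall>b. L X (d b) = d (X b)))"

text \<open>hat-nabla for sum X (x) Y = - sum_i (c_i + e_i/2) (x) e^i.\<close>
definition hat_nabla :: "('a::{comm_ring_1,real_algebra_1} \<Rightarrow> 'w::ab_group_add \<Rightarrow> 'w)
    \<Rightarrow> (('a \<Rightarrow> 'a) \<Rightarrow> 'w \<Rightarrow> 'w) \<Rightarrow> ('i::finite \<Rightarrow> 'a \<Rightarrow> 'a) \<Rightarrow> ('i \<Rightarrow> 'a \<Rightarrow> 'a) \<Rightarrow> ('i \<Rightarrow> 'a \<Rightarrow> 'a)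
    \<Rightarrow> 'a \<Rightarrow> 'w \<Rightarrow> 'w" where
  "hat_nabla sc L cc ee eu a x =
     (let Xs = (\<lambda>i b. - (cc i b + of_real (1/2) * ee i b)); Ys = eu in
      (\<Sum>i\<in>UNIV. sc (Xs i a) (L (Ys i) x) - sc (Ys i a) (L (Xs i) x)))"

end

theory Submission
  imports Defs
begin

text \<open>
  Each derivation \<open>e\<^sup>i\<close> sends both kinds of generators, \<open>v\<close> and \<open>f\<close>, to constants, so by
  Cartan's formula \<open>L\<^sub>D (d b) = d (D b)\<close> the first half of \<open>\<nabla>\<^sub>a (d b)\<close> vanishes for every
  generator \<open>b\<close>, leaving \<open>\<Sum>\<^sub>i e\<^sup>i(a) d((c\<^sub>i + e\<^sub>i/2) b)\<close>. For \<open>a = f\<close> all coefficients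
  \<open>e\<^sup>i(f)\<close> vanish; for \<open>a = v\<close> they are the coordinates of \<open>v\<close>, and since \<open>(c\<^sub>i + e\<^sub>i/2) b\<close>
  depends linearly on the basis vector \<open>e\<^sub>i\<close>, the sum collapses to \<open>d((c\<^sub>v + e\<^sub>v/2) b)\<close>,
  which is \<open>d[v,w]/2\<close> for \<open>b = w\<close> and \<open>d(v \<triangleright> h)\<close> for \<open>b = h\<close>.
\<close>

lemma forms_module_zero_left:
  assumes "forms_module sc"
  shows "sc 0 x = 0"
proof -
  have "sc (0 + 0) x = sc 0 x + sc 0 x"
    using assms unfolding forms_module_def by blast
  then show ?thesis by simp
qed

lemma forms_module_zero_right:
  assumes "forms_module sc"
  shows "sc a 0 = 0"
proof -
  have "sc a (0 + 0) = sc a 0 + sc a 0"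
    using assms unfolding forms_module_def by blast
  then show ?thesis by simp
qed

lemma forms_module_minus_right:
  assumes "forms_module sc"
  shows "sc a (- x) = - sc a x"
proof -
  have "sc a x + sc a (- x) = sc a (x + - x)"
    using assms unfolding forms_module_def by metis
  then show ?thesis
    by (simp add: forms_module_zero_right[OF assms] add_eq_0_iff)
qed

lemma differential_zero:
  assumes "differential sc d"
  shows "d 0 = 0"
proof -
  have "d (0 + 0) = d 0 + d 0"
    using assms unfolding differential_def by blast
  then show ?thesis by simp
qed

lemma differential_minus:
  assumes "differential sc d"
  shows "d (- a) = - d a"
proof -
  have "d a + d (- a) = d (a + - a)"
    using assms unfolding differential_def by metis
  then show ?thesis
    by (simp add: differential_zero[OF assms] add_eq_0_iff)
qed

lemma differential_sum:
  assumes "differential sc d"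
  shows "d (\<Sum>i\<in>A. g i) = (\<Sum>i\<in>A. d (g i))"
proof -
  have "d (a + b) = d a + d b" for a b
    using assms unfolding differential_def by blast
  then show ?thesis
    using sum_comp_morphism[of d g A] differential_zero[OF assms] by (simp add: comp_def)
qed

lemma differential_of_real:
  assumes "forms_module sc" and "differential sc d"
  shows "d (of_real r) = 0"
proof -
  have "d 1 = sc 1 (d 1) + sc 1 (d 1)"
    using assms(2) unfolding differential_def by (metis mult_1)
  then have "d 1 = 0"
    using assms(1) unfolding forms_module_def by simp
  then show ?thesis
    using assms(2) forms_module_zero_right[OF assms(1)]
    unfolding differential_def by (metis mult.right_neutral)
qed

lemma is_deriv_of_real:
  assumes "is_deriv D"
  shows "D (of_real r) = 0"
proof -
  have "D 1 = 0"
    using assms unfolding is_deriv_def by (metis add_cancel_left_left mult_1 add_0)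
  then show ?thesis
    using assms unfolding is_deriv_def by (metis mult.right_neutral mult_zero_right)
qed

lemma is_deriv_uminus:
  assumes "is_deriv D"
  shows "is_deriv (\<lambda>a. - D a)"
  using assms is_deriv_of_real[OF assms] unfolding is_deriv_def by simp

lemma is_deriv_add:
  assumes "is_deriv D" and "is_deriv E"
  shows "is_deriv (\<lambda>a. D a + E a)"
  using assms is_deriv_of_real[OF assms(1)] is_deriv_of_real[OF assms(2)]
  unfolding is_deriv_def by (simp add: distrib_left)

lemma is_deriv_of_real_mult:
  assumes "is_deriv D"
  shows "is_deriv (\<lambda>a. of_real r * D a)"
  using assms is_deriv_of_real[OF assms] unfolding is_deriv_def
  by (simp add: distrib_left mult.left_commute)

lemma linear_dual_basis_expansion:
  assumes "dual_basis e ed" and "linear T"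
  shows "T v = (\<Sum>i\<in>UNIV. ed i v *\<^sub>R T (e i))"
proof -
  have "T v = T (\<Sum>i\<in>UNIV. ed i v *\<^sub>R e i)"
    using assms(1) unfolding dual_basis_def by metis
  then show ?thesis
    using assms(2) by (simp add: linear_sum linear_scale)
qed

lemma lie_algebra_linear_left:
  assumes "lie_algebra br"
  shows "linear (\<lambda>u. br u w)"
proof -
  have "linear (\<lambda>u. - br w u)"
    using assms unfolding lie_algebra_def by (blast intro: linear_compose_neg)
  moreover have "br u w = - br w u" for u
    using assms unfolding lie_algebra_def by blast
  ultimately show ?thesis by simp
qed

lemma linear_of_real_hom:
  fixes j :: "'b::real_algebra_1 \<Rightarrow> 'c::real_algebra_1"
  assumes "\<forall>x y. j (x + y) = j x + j y" and "\<forall>r x. j (of_real r * x) = of_real r * j x"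
  shows "linear j"
  using assms by (simp add: linear_iff scaleR_conv_of_real)

lemma hat_nabla_exact:
  assumes "forms_module sc" and "differential sc d" and "lie_derivative sc d L"
    and "\<forall>i. is_deriv (ee i) \<and> is_deriv (eu i) \<and> is_deriv (cc i)"
    and "\<forall>i. eu i b \<in> range of_real"
  shows "hat_nabla sc L cc ee eu a (d b) =
    (\<Sum>i\<in>UNIV. sc (eu i a) (d (cc i b + of_real (1/2) * ee i b)))"
proof -
  have L_d: "L D (d c) = d (D c)" if "is_deriv D" for D c
    using assms(3) that unfolding lie_derivative_def by blast
  have "L (eu i) (d b) = 0" for i
  proof -
    obtain r where "eu i b = of_real r"
      using assms(5) by blast
    then show ?thesis
      using assms(4) L_d differential_of_real[OF assms(1,2)] by simp
  qed
  moreover have "L (\<lambda>c. - (cc i c + of_real (1/2) * ee i c)) (d b)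
      = - d (cc i b + of_real (1/2) * ee i b)" for i
  proof -
    have "is_deriv (cc i)" and "is_deriv (ee i)"
      using assms(4) by blast+
    then have "is_deriv (\<lambda>c. - (cc i c + of_real (1/2) * ee i c))"
      by (intro is_deriv_uminus is_deriv_add is_deriv_of_real_mult)
    then show ?thesis
      by (simp only: L_d differential_minus[OF assms(2)])
  qed
  ultimately show ?thesis
    unfolding hat_nabla_def Let_def
    by (simp add: forms_module_zero_right[OF assms(1)] forms_module_minus_right[OF assms(1)])
qed

lemma hat_nabla_exact_eq_zero:
  assumes "forms_module sc" and "differential sc d" and "lie_derivative sc d L"
    and "\<forall>i. is_deriv (ee i) \<and> is_deriv (eu i) \<and> is_deriv (cc i)"
    and "\<forall>i. eu i b \<in> range of_real" and "\<forall>i. eu i a = 0"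
  shows "hat_nabla sc L cc ee eu a (d b) = 0"
  using hat_nabla_exact[OF assms(1-5)] assms(6) by (simp add: forms_module_zero_left[OF assms(1)])

lemma hat_nabla_exact_dual_basis:
  assumes "forms_module sc" and "differential sc d" and "lie_derivative sc d L"
    and "\<forall>i. is_deriv (ee i) \<and> is_deriv (eu i) \<and> is_deriv (cc i)"
    and "\<forall>i. eu i b \<in> range of_real"
    and "dual_basis e ed" and "\<forall>i. eu i a = of_real (ed i v)"
    and "linear T" and "\<forall>i. cc i b + of_real (1/2) * ee i b = T (e i)"
  shows "hat_nabla sc L cc ee eu a (d b) = d (T v)"
proof -
  have "d (of_real r * c) = sc (of_real r) (d c)" for r c
    using assms(2) unfolding differential_def by blast
  then have "hat_nabla sc L cc ee eu a (d b) = (\<Sum>i\<in>UNIV. d (of_real (ed i v) * T (e i)))"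
    using hat_nabla_exact[OF assms(1-5)] assms(7,9) by simp
  also have "\<dots> = d (\<Sum>i\<in>UNIV. ed i v *\<^sub>R T (e i))"
    by (simp add: differential_sum[OF assms(2)] scaleR_conv_of_real)
  also have "\<dots> = d (T v)"
    by (simp only: linear_dual_basis_expansion[OF assms(6,8), symmetric])
  finally show ?thesis .
qed

theorem proposition6p1p3:
  fixes br :: "'g::real_vector \<Rightarrow> 'g \<Rightarrow> 'g"
    and act :: "'g \<Rightarrow> 'f::{comm_ring_1,real_algebra_1} \<Rightarrow> 'f"
    and e :: "'i::finite \<Rightarrow> 'g" and ed :: "'i \<Rightarrow> 'g \<Rightarrow> real"
    and jF :: "'f \<Rightarrow> 'a::{comm_ring_1,real_algebra_1}" and jg :: "'g \<Rightarrow> 'a"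
    and sc :: "'a \<Rightarrow> 'w::ab_group_add \<Rightarrow> 'w" and d :: "'a \<Rightarrow> 'w"
    and L :: "('a \<Rightarrow> 'a) \<Rightarrow> 'w \<Rightarrow> 'w"
    and cc ee eu :: "'i \<Rightarrow> 'a \<Rightarrow> 'a"
    and v w :: 'g and f h :: 'f
  assumes "lie_algebra br" and "lie_action br act" and "dual_basis e ed"
    and "\<forall>r f. jF (of_real r * f) = of_real r * jF f"
    and "\<forall>f1 f2. jF (f1 + f2) = jF f1 + jF f2"
    and "\<forall>f1 f2. jF (f1 * f2) = jF f1 * jF f2" and "jF 1 = 1"
    and "linear jg"
    and "gen_alg jF jg = UNIV"
    and "forms_module sc" and "differential sc d" and "gen_forms sc d = UNIV"
    and "lie_derivative sc d L"
    and "\<forall>i. is_deriv (ee i) \<and> is_deriv (eu i) \<and> is_deriv (cc i)"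
    and "\<forall>i u. ee i (jg u) = jg (br (e i) u)" and "\<forall>i g. ee i (jF g) = 0"
    and "\<forall>i u. eu i (jg u) = of_real (ed i u)" and "\<forall>i g. eu i (jF g) = 0"
    and "\<forall>i u. cc i (jg u) = 0" and "\<forall>i g. cc i (jF g) = jF (act (e i) g)"
  shows "hat_nabla sc L cc ee eu (jg v) (d (jg w)) = sc (of_real (1/2)) (d (jg (br v w))) \<and>
     hat_nabla sc L cc ee eu (jg v) (d (jF h)) = d (jF (act v h)) \<and>
     hat_nabla sc L cc ee eu (jF f) (d (jg w)) = 0 \<and>
     hat_nabla sc L cc ee eu (jF f) (d (jF h)) = 0"
proof -
  note setting = assms(10,11,13,14)
  have exact_jg: "\<forall>i. eu i (jg w) \<in> range of_real" and exact_jF: "\<forall>i. eu i (jF h) \<in> range of_real"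
    using assms(17,18) by (auto intro: range_eqI[where x = 0])
  have "linear (\<lambda>u. jg (br u w))"
    using linear_compose[OF lie_algebra_linear_left[OF assms(1)] assms(8)] by (simp add: comp_def)
  then have "linear (\<lambda>u. of_real (1/2) * jg (br u w))"
    using linear_compose_scale_right by (simp add: scaleR_conv_of_real[symmetric])
  then have "hat_nabla sc L cc ee eu (jg v) (d (jg w)) = d (of_real (1/2) * jg (br v w))"
    using assms(15,17,19) by (intro hat_nabla_exact_dual_basis[OF setting exact_jg assms(3)]) simp_all
  also have "\<dots> = sc (of_real (1/2)) (d (jg (br v w)))"
    using assms(11) unfolding differential_def by blast
  finally have bracket: "hat_nabla sc L cc ee eu (jg v) (d (jg w)) = sc (of_real (1/2)) (d (jg (br v w)))" .
  have "linear (\<lambda>u. act u h)"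
    using assms(2) unfolding lie_action_def by blast
  then have "linear (\<lambda>u. jF (act u h))"
    using linear_compose[OF _ linear_of_real_hom[OF assms(5,4)]] by (simp add: comp_def)
  then have action: "hat_nabla sc L cc ee eu (jg v) (d (jF h)) = d (jF (act v h))"
    using assms(16,17,20) by (intro hat_nabla_exact_dual_basis[OF setting exact_jF assms(3)]) simp_all
  have vanish: "hat_nabla sc L cc ee eu (jF f) (d b) = 0" if "\<forall>i. eu i b \<in> range of_real" for b
    using hat_nabla_exact_eq_zero[OF setting that] assms(18) by simp
  show ?thesis
    using bracket action vanish exact_jg exact_jF by blast
qed

end
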